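(* Let $n\geq 3$ and let $A$ and $B$ be two $n\times n$ generalized tournament matrices with the same principal minors of orders at most $4$. Suppose that $A$ is separable. If there is no $\alpha>1/2$ such that $A$ and $B$ are both $\alpha$-linear, then $A$ and $B$ have a common nontrivial clan.
   Context: A generalized tournament matrix of order $n$ is a real $n\times n$ matrix $M=(m_{ij})$ with nonnegative entries satisfying $M+M^{t}=J_n-I_n$. Write $[n]=\{1,\ldots,n\}$. A clan of $M$ is a subset $X\subseteq[n]$ such that for all $i,j\in X$ and $k\in[n]\setminus X$, $m_{ik}=m_{jk}$ and $m_{ki}=m_{kj}$; the empty set, singletons and $[n]$ are trivial clans. $M$ is separable if $[n]$ can be partitioned into two nonempty clans. For $\alpha>1/2$, $M$ is $\alpha$-linear if there is an ordering $x_1,\ldots,x_n$ of $[n]$ with $m_{x_ix_j}=\alpha$ whenever $i<j$. *)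

theory Defs
  imports "HOL-Analysis.Analysis"
begin

text \<open>Real n-by-n matrices are represented as functions nat => nat => real,
  only the entries with indices in {0..<n} being relevant; [n] is rendered as {0..<n}.\<close>

definition gen_tournament :: "nat \<Rightarrow> (nat \<Rightarrow> nat \<Rightarrow> real) \<Rightarrow> bool" where
  "gen_tournament n M \<longleftrightarrow>
     (\<forall>i<n. \<forall>j<n. M i j \<ge> 0) \<and>
     (\<forall>i<n. \<forall>j<n. M i j + M j i = (if i = j then 0 else 1))"

definition principal_minor :: "(nat \<Rightarrow> nat \<Rightarrow> real) \<Rightarrow> nat set \<Rightarrow> real" where
  "principal_minor M I = (\<Sum>p\<in>{p. p permutes I}. of_int (sign p) * (\<Prod>i\<in>I. M i (p i)))"

definition is_clan :: "nat \<Rightarrow> (nat \<Rightarrow> nat \<Rightarrow> real) \<Rightarrow> nat set \<Rightarrow> bool" where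
  "is_clan n M X \<longleftrightarrow> X \<subseteq> {0..<n} \<and>
     (\<forall>i\<in>X. \<forall>j\<in>X. \<forall>k\<in>{0..<n} - X. M i k = M j k \<and> M k i = M k j)"

definition trivial_clan :: "nat \<Rightarrow> nat set \<Rightarrow> bool" where
  "trivial_clan n X \<longleftrightarrow> X = {} \<or> card X = 1 \<or> X = {0..<n}"

definition separable :: "nat \<Rightarrow> (nat \<Rightarrow> nat \<Rightarrow> real) \<Rightarrow> bool" where
  "separable n M \<longleftrightarrow> (\<exists>X Y. X \<noteq> {} \<and> Y \<noteq> {} \<and> X \<inter> Y = {} \<and> X \<union> Y = {0..<n}
       \<and> is_clan n M X \<and> is_clan n M Y)"

definition alpha_linear :: "nat \<Rightarrow> real \<Rightarrow> (nat \<Rightarrow> nat \<Rightarrow> real) \<Rightarrow> bool" where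
  "alpha_linear n \<alpha> M \<longleftrightarrow> \<alpha> > 1/2 \<and>
     (\<exists>x. bij_betw x {0..<n} {0..<n} \<and> (\<forall>i<n. \<forall>j<n. i < j \<longrightarrow> M (x i) (x j) = \<alpha>))"

end

theory Submission
  imports Defs
begin

text \<open>Equal principal minors of order 2 force \<open>B i j \<in> {A i j, 1 - A i j}\<close>, and those of
  order 3 constrain how these choices interact on triangles. Call \<open>L\<close> a \<open>c\<close>-cut of \<open>M\<close> if every
  entry from \<open>L\<close> to its complement equals \<open>c\<close>, and call \<open>u\<close>, \<open>v\<close> \<open>c\<close>-separated if some
  \<open>c\<close>-cut contains exactly one of them. The key fact is that \<open>c\<close>-separation in \<open>A\<close> implies
  \<open>c\<close>-separation in \<open>B\<close>: for \<open>c \<noteq> 1/2\<close> the sets of positions outside a cut \<open>L\<close> at which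
  \<open>B\<close> reverses \<open>A\<close> form a chain indexed by \<open>L\<close>, and cutting this chain at \<open>u\<close> yields a
  \<open>c\<close>-cut of \<open>B\<close>.

  A separation of \<open>A\<close> provides a \<open>c\<close>-cut with \<open>c \<ge> 1/2\<close>. If two distinct points are not
  \<open>c\<close>-separated, the points not separated from the first one form a nontrivial clan of both
  matrices. Otherwise all pairs are separated, which makes \<open>A\<close> and \<open>B\<close> \<open>c\<close>-linear for
  \<open>c > 1/2\<close>, and constant \<open>1/2\<close> off the diagonal for \<open>c = 1/2\<close>.\<close>

lemma principal_minor_doubleton:
  assumes "i \<noteq> j"
  shows "principal_minor M {i,j} = M i i * M j j - M i j * M j i"
proof -
  have f: "finite {j}" "i \<notin> {j}" using assms by auto
  show ?thesis
    unfolding principal_minor_def sum_over_permutations_insert[OF f] permutes_sing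
    using assms by (simp add: sign_swap_id mult.commute)
qed

lemma principal_minor_triple:
  assumes "i \<noteq> j" "i \<noteq> k" "j \<noteq> k"
  shows "principal_minor M {i,j,k} =
    M i i * M j j * M k k + M i j * M j k * M k i + M i k * M j i * M k j
    - M i i * M j k * M k j - M i j * M j i * M k k - M i k * M j j * M k i"
proof -
  have f1: "finite {j,k}" "i \<notin> {j,k}" using assms by auto
  have f2: "finite {k}" "j \<notin> {k}" using assms by auto
  show ?thesis
    unfolding principal_minor_def sum_over_permutations_insert[OF f1]
      sum_over_permutations_insert[OF f2] permutes_sing
    using assms by (simp add: sign_swap_id permutation_swap_id sign_compose algebra_simps)
qed

lemma gen_tournament_diag: "gen_tournament n M \<Longrightarrow> i < n \<Longrightarrow> M i i = 0"
  unfolding gen_tournament_def by fastforce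

lemma gen_tournament_converse:
  "gen_tournament n M \<Longrightarrow> i < n \<Longrightarrow> j < n \<Longrightarrow> i \<noteq> j \<Longrightarrow> M j i = 1 - M i j"
  unfolding gen_tournament_def by (metis add_diff_cancel_left')

lemma gen_tournament_principal_minor_triple:
  assumes "gen_tournament n M" "i < n" "j < n" "k < n" "i \<noteq> j" "i \<noteq> k" "j \<noteq> k"
  shows "principal_minor M {i,j,k} = M i j * M j k * M k i + M i k * M k j * M j i"
  using principal_minor_triple[OF assms(5-7), of M] gen_tournament_diag[OF assms(1)] assms(2-4)
  by (simp add: algebra_simps)

definition uniform_cut :: "nat \<Rightarrow> (nat \<Rightarrow> nat \<Rightarrow> real) \<Rightarrow> real \<Rightarrow> nat set \<Rightarrow> bool" where
  "uniform_cut n M c L \<longleftrightarrow> L \<subseteq> {0..<n} \<and> (\<forall>l\<in>L. \<forall>r\<in>{0..<n} - L. M l r = c)"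

definition separated :: "nat \<Rightarrow> (nat \<Rightarrow> nat \<Rightarrow> real) \<Rightarrow> real \<Rightarrow> nat \<Rightarrow> nat \<Rightarrow> bool" where
  "separated n M c u v \<longleftrightarrow> u < n \<and> v < n \<and> (\<exists>L. uniform_cut n M c L \<and> (u \<in> L \<longleftrightarrow> v \<notin> L))"

lemma separated_commute: "separated n M c u v \<longleftrightarrow> separated n M c v u"
  unfolding separated_def by blast

lemma uniform_cut_entry:
  assumes L: "uniform_cut n M c L" and M: "gen_tournament n M"
    and ik: "i < n" "k < n" "i \<in> L \<longleftrightarrow> k \<notin> L"
  shows "M i k = (if i \<in> L then c else 1 - c)"
proof -
  have "i \<noteq> k" using ik by blast
  then show ?thesis
    using L ik gen_tournament_converse[OF M ik(2,1)] unfolding uniform_cut_def by auto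
qed

lemma uniform_cut_complement:
  assumes "uniform_cut n M c L" "gen_tournament n M"
  shows "uniform_cut n M (1 - c) ({0..<n} - L)"
  using uniform_cut_entry[OF assms] assms(1) unfolding uniform_cut_def by auto

lemma separated_entry:
  assumes "separated n M c u v" "gen_tournament n M"
  shows "M u v = c \<or> M u v = 1 - c"
  using assms uniform_cut_entry unfolding separated_def by metis

lemma exists_separated:
  assumes "uniform_cut n M c L" "L \<noteq> {}" "L \<noteq> {0..<n}" "u < n"
  shows "\<exists>w<n. separated n M c u w"
proof -
  have "L \<subseteq> {0..<n}" using assms(1) unfolding uniform_cut_def by simp
  then have "\<exists>w<n. u \<in> L \<longleftrightarrow> w \<notin> L"
    using assms(2,3) by (cases "u \<in> L") auto
  then show ?thesis using assms(1,4) unfolding separated_def by blast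
qed

lemma unseparated_class_is_clan:
  assumes M: "gen_tournament n M"
  shows "is_clan n M {w. w < n \<and> \<not> separated n M c u w}" (is "is_clan n M ?P")
proof -
  have "M i k = M j k \<and> M k i = M k j" if i: "i \<in> ?P" and j: "j \<in> ?P" and k: "k \<in> {0..<n} - ?P"
    for i j k
  proof -
    obtain L where L: "uniform_cut n M c L" "u \<in> L \<longleftrightarrow> k \<notin> L" and u: "u < n"
      using k unfolding separated_def by auto
    have "i \<in> L \<longleftrightarrow> u \<in> L" "j \<in> L \<longleftrightarrow> u \<in> L"
      using i j L(1) u unfolding separated_def by auto
    then have "i \<in> L \<longleftrightarrow> k \<notin> L" "j \<in> L \<longleftrightarrow> k \<notin> L" "k \<in> L \<longleftrightarrow> i \<notin> L" "k \<in> L \<longleftrightarrow> j \<notin> L"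
      using L(2) by blast+
    moreover have "i < n" "j < n" "k < n" using i j k by auto
    ultimately show ?thesis
      using uniform_cut_entry[OF L(1) M] \<open>i \<in> L \<longleftrightarrow> u \<in> L\<close> \<open>j \<in> L \<longleftrightarrow> u \<in> L\<close> by simp
  qed
  moreover have "?P \<subseteq> {0..<n}" by auto
  ultimately show ?thesis unfolding is_clan_def by blast
qed

lemma not_trivial_clan:
  assumes "X \<subseteq> {0..<n}" "u \<in> X" "v \<in> X" "u \<noteq> v" "w < n" "w \<notin> X"
  shows "\<not> trivial_clan n X"
proof -
  have "finite X" using assms(1) finite_subset by blast
  then have "card {u, v} \<le> card X" using assms(2,3) by (intro card_mono) auto
  then show ?thesis using assms unfolding trivial_clan_def by auto
qed

lemma is_clan_if_off_diagonal_constant: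
  assumes "\<And>i j. i < n \<Longrightarrow> j < n \<Longrightarrow> i \<noteq> j \<Longrightarrow> M i j = a" "X \<subseteq> {0..<n}"
  shows "is_clan n M X"
proof -
  have "M i k = a" "M k i = a" if "i \<in> X" "k \<in> {0..<n} - X" for i k
    using assms(1)[of i k] assms(1)[of k i] subsetD[OF assms(2) that(1)] that by auto
  then show ?thesis using assms(2) unfolding is_clan_def by simp
qed

lemma strict_total_order_enumeration:
  fixes n :: nat and R :: "nat \<Rightarrow> nat \<Rightarrow> bool"
  assumes trans: "\<And>u v w. u < n \<Longrightarrow> v < n \<Longrightarrow> w < n \<Longrightarrow> R u v \<Longrightarrow> R v w \<Longrightarrow> R u w"
    and irrefl: "\<And>u. u < n \<Longrightarrow> \<not> R u u"
    and total: "\<And>u v. u < n \<Longrightarrow> v < n \<Longrightarrow> u \<noteq> v \<Longrightarrow> R u v \<or> R v u"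
  shows "\<exists>x. bij_betw x {0..<n} {0..<n} \<and> (\<forall>i<n. \<forall>j<n. i < j \<longrightarrow> R (x i) (x j))"
proof -
  define rank where "rank v = card {u. u < n \<and> R u v}" for v
  have finite_preds: "finite {u. u < n \<and> R u v}" for v
    by simp
  have rank_less: "rank u < rank v" if "u < n" "v < n" "R u v" for u v
  proof -
    have "{w. w < n \<and> R w u} \<subseteq> {w. w < n \<and> R w v}"
      using trans[of _ u v] that by blast
    moreover have "u \<in> {w. w < n \<and> R w v} - {w. w < n \<and> R w u}"
      using that irrefl by auto
    ultimately have "{w. w < n \<and> R w u} \<subset> {w. w < n \<and> R w v}" by blast
    then show ?thesis unfolding rank_def using finite_preds by (rule psubset_card_mono[rotated])
  qed
  have rank_bound: "rank v < n" if "v < n" for v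
  proof -
    have "{u. u < n \<and> R u v} \<subseteq> {0..<n} - {v}" using irrefl that by auto
    then have "rank v \<le> card ({0..<n} - {v})" unfolding rank_def by (intro card_mono) auto
    then show ?thesis using that by auto
  qed
  have "inj_on rank {0..<n}"
  proof (rule inj_onI, rule ccontr)
    fix u v assume "u \<in> {0..<n}" "v \<in> {0..<n}" "rank u = rank v" "u \<noteq> v"
    then show False using total[of u v] rank_less[of u v] rank_less[of v u] by auto
  qed
  moreover have "rank ` {0..<n} = {0..<n}"
    by (rule endo_inj_surj) (use rank_bound \<open>inj_on rank {0..<n}\<close> in auto)
  ultimately have bij: "bij_betw rank {0..<n} {0..<n}" unfolding bij_betw_def by simp
  define x where "x = inv_into {0..<n} rank"
  have x: "bij_betw x {0..<n} {0..<n}" unfolding x_def by (rule bij_betw_inv_into[OF bij])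
  have rank_x: "rank (x i) = i" if "i < n" for i
    using bij that unfolding x_def by (simp add: bij_betw_inv_into_right)
  have x_less: "x i < n" if "i < n" for i
    using x that unfolding bij_betw_def by auto
  have "R (x i) (x j)" if "i < n" "j < n" "i < j" for i j
  proof -
    have "x i \<noteq> x j" using rank_x that by (metis less_irrefl)
    moreover have "\<not> R (x j) (x i)"
    proof
      assume "R (x j) (x i)"
      then have "rank (x j) < rank (x i)" using rank_less x_less that by blast
      then show False using rank_x that by simp
    qed
    ultimately show ?thesis using total[OF x_less x_less, of i j] that by blast
  qed
  then show ?thesis using x by blast
qed

lemma alpha_linear_if_all_separated:
  assumes M: "gen_tournament n M" and c: "c > 1/2"
    and all: "\<And>u v. u < n \<Longrightarrow> v < n \<Longrightarrow> u \<noteq> v \<Longrightarrow> separated n M c u v"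
  shows "alpha_linear n c M"
proof -
  have diag: "M u u \<noteq> c" if "u < n" for u
    using gen_tournament_diag[OF M that] c by simp
  have asym: "M v u \<noteq> c" if "u < n" "v < n" "M u v = c" for u v
    using gen_tournament_converse[OF M that(1,2)] diag that c by (cases "u = v") auto
  have "M u w = c" if uvw: "u < n" "v < n" "w < n" "M u v = c" "M v w = c" for u v w
  proof -
    have "u \<noteq> w" using asym uvw by blast
    then obtain L where L: "uniform_cut n M c L" "u \<in> L \<longleftrightarrow> w \<notin> L"
      using all uvw unfolding separated_def by blast
    have "u \<in> L"
    proof (cases "u \<in> L \<longleftrightarrow> v \<notin> L")
      case True
      then show ?thesis using uniform_cut_entry[OF L(1) M uvw(1,2)] uvw(4) c by auto
    next
      case False
      then have "v \<in> L \<longleftrightarrow> w \<notin> L" using L(2) by blast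
      then have "v \<in> L" using uniform_cut_entry[OF L(1) M uvw(2,3)] uvw(5) c by auto
      then show ?thesis using False L(2) by blast
    qed
    then show ?thesis using uniform_cut_entry[OF L(1) M] uvw L(2) by simp
  qed
  moreover have "M u v = c \<or> M v u = c" if "u < n" "v < n" "u \<noteq> v" for u v
    using separated_entry[OF all[OF that] M] gen_tournament_converse[OF M that] by auto
  ultimately obtain x where "bij_betw x {0..<n} {0..<n}" "\<forall>i<n. \<forall>j<n. i < j \<longrightarrow> M (x i) (x j) = c"
    using strict_total_order_enumeration[of n "\<lambda>u v. M u v = c"] diag by blast
  then show ?thesis unfolding alpha_linear_def using c by blast
qed

lemma separable_uniform_cut:
  assumes "separable n M" "gen_tournament n M"
  shows "\<exists>c L. c \<ge> 1/2 \<and> uniform_cut n M c L \<and> L \<noteq> {} \<and> L \<noteq> {0..<n}"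
proof -
  obtain X Y where XY: "X \<noteq> {}" "Y \<noteq> {}" "X \<inter> Y = {}" "X \<union> Y = {0..<n}"
    "is_clan n M X" "is_clan n M Y"
    using assms(1) unfolding separable_def by blast
  obtain x0 y0 where x0: "x0 \<in> X" and y0: "y0 \<in> Y" using XY by blast
  have "M x y = M x0 y0" if "x \<in> X" "y \<in> {0..<n} - X" for x y
  proof -
    have "M x y = M x0 y" using XY(5) x0 that unfolding is_clan_def by blast
    also have "\<dots> = M x0 y0" using XY x0 y0 that unfolding is_clan_def by blast
    finally show ?thesis .
  qed
  then have X: "uniform_cut n M (M x0 y0) X" using XY(4) unfolding uniform_cut_def by blast
  have "X \<subseteq> {0..<n}" "X \<noteq> {0..<n}" using XY by auto
  then have X': "uniform_cut n M (1 - M x0 y0) ({0..<n} - X)" "{0..<n} - X \<noteq> {}"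
    "{0..<n} - X \<noteq> {0..<n}"
    using uniform_cut_complement[OF X assms(2)] XY(1) by auto
  show ?thesis
  proof (cases "M x0 y0 \<ge> 1/2")
    case True
    then show ?thesis using X XY(1) \<open>X \<noteq> {0..<n}\<close> by blast
  next
    case False
    then have "1 - M x0 y0 \<ge> 1/2" by simp
    then show ?thesis using X' by blast
  qed
qed

locale same_small_minors =
  fixes n :: nat and A B :: "nat \<Rightarrow> nat \<Rightarrow> real"
  assumes tournament_A: "gen_tournament n A" and tournament_B: "gen_tournament n B"
    and minors_eq: "\<And>I. I \<subseteq> {0..<n} \<Longrightarrow> card I \<le> 3 \<Longrightarrow> principal_minor A I = principal_minor B I"
begin

lemma swap: "same_small_minors n B A"
  using tournament_A tournament_B minors_eq by unfold_locales metis+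

lemma B_entry_cases:
  assumes "i < n" "j < n" "i \<noteq> j"
  shows "B i j = A i j \<or> B i j = 1 - A i j"
proof -
  have "principal_minor A {i,j} = principal_minor B {i,j}"
    by (rule minors_eq) (use assms in auto)
  then have "A i j * (1 - A i j) = B i j * (1 - B i j)"
    using principal_minor_doubleton[OF assms(3)]
      gen_tournament_diag[OF tournament_A] gen_tournament_diag[OF tournament_B]
      gen_tournament_converse[OF tournament_A assms] gen_tournament_converse[OF tournament_B assms]
      assms(1,2) by simp
  then have "(B i j - A i j) * (B i j - (1 - A i j)) = 0"
    by (simp add: algebra_simps)
  then show ?thesis by auto
qed

lemma three_cycle_sum_eq:
  assumes "i < n" "j < n" "k < n" "i \<noteq> j" "i \<noteq> k" "j \<noteq> k"
  shows "A i j * A j k * A k i + A i k * A k j * A j i = B i j * B j k * B k i + B i k * B k j * B j i"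
proof -
  have "principal_minor A {i,j,k} = principal_minor B {i,j,k}"
    by (rule minors_eq) (use assms in \<open>auto simp: card_insert_if\<close>)
  then show ?thesis
    using gen_tournament_principal_minor_triple[OF tournament_A assms]
      gen_tournament_principal_minor_triple[OF tournament_B assms] by simp
qed

lemma source_pair_entry:
  assumes c: "c \<noteq> 1/2"
    and lt: "l < n" "l' < n" "r < n" and d: "l \<noteq> l'" "l \<noteq> r" "l' \<noteq> r"
    and h: "A l r = c" "A l' r = c" "B l r = 1 - c" "B l' r = c"
  shows "B l l' = 1 - c"
proof -
  have "A r l = 1 - c" "A r l' = 1 - c" "A l' l = 1 - A l l'"
       "B r l = c" "B r l' = 1 - c" "B l' l = 1 - B l l'"
    using gen_tournament_converse tournament_A tournament_B lt d h by (metis diff_diff_cancel)+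
  with three_cycle_sum_eq[OF lt d] h have "A l l' * c * (1 - c) + c * (1 - c) * (1 - A l l')
      = B l l' * c * c + (1 - c) * (1 - c) * (1 - B l l')" by simp
  then have "(2*c - 1) * (B l l' - (1 - c)) = 0" by (simp add: algebra_simps)
  with c show ?thesis by auto
qed

lemma target_pair_entry:
  assumes c: "c \<noteq> 1/2"
    and lt: "l < n" "r < n" "r' < n" and d: "l \<noteq> r" "l \<noteq> r'" "r \<noteq> r'"
    and h: "A l r = c" "A l r' = c" "B l r = 1 - c" "B l r' = c"
  shows "B r r' = c"
proof -
  have "A r l = 1 - c" "A r' l = 1 - c" "A r' r = 1 - A r r'"
       "B r l = c" "B r' l = 1 - c" "B r' r = 1 - B r r'"
    using gen_tournament_converse tournament_A tournament_B lt d h by (metis diff_diff_cancel)+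
  with three_cycle_sum_eq[OF lt d] h have "c * A r r' * (1 - c) + c * (1 - A r r') * (1 - c)
      = (1 - c) * B r r' * (1 - c) + c * (1 - B r r') * c" by simp
  then have "(1 - 2*c) * (B r r' - c) = 0" by (simp add: algebra_simps)
  with c show ?thesis by auto
qed

lemma uniform_cut_half:
  assumes "uniform_cut n A (1/2) L"
  shows "uniform_cut n B (1/2) L"
  using assms B_entry_cases unfolding uniform_cut_def by fastforce

end

locale cut_transfer = same_small_minors +
  fixes c :: real and L :: "nat set"
  assumes A_cut: "uniform_cut n A c L" and c_ne_half: "c \<noteq> 1/2"
begin

definition flipped :: "nat \<Rightarrow> nat set" where
  "flipped l = {r \<in> {0..<n} - L. B l r = 1 - c}"

lemma L_subset: "L \<subseteq> {0..<n}"
  using A_cut unfolding uniform_cut_def by simp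

lemma L_less: "l \<in> L \<Longrightarrow> l < n"
  using L_subset by auto

lemma A_cross_entry: "l \<in> L \<Longrightarrow> r \<in> {0..<n} - L \<Longrightarrow> A l r = c"
  using A_cut unfolding uniform_cut_def by blast

lemma B_cross_entry:
  assumes "l \<in> L" "r \<in> {0..<n} - L" "r \<notin> flipped l"
  shows "B l r = c"
proof -
  have "l < n" "r < n" "l \<noteq> r" using assms(1,2) L_less by auto
  then show ?thesis
    using B_entry_cases[of l r] A_cross_entry[OF assms(1,2)] assms(2,3) unfolding flipped_def by auto
qed

lemma B_entry_from_flipped:
  assumes "l \<in> L" "r \<in> flipped l"
  shows "B r l = c"
proof -
  have "l < n" "r < n" "l \<noteq> r" "B l r = 1 - c" using assms L_less unfolding flipped_def by auto
  then show ?thesis using gen_tournament_converse[OF tournament_B, of l r] by simp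
qed

lemma B_entry_if_flipped_diff:
  assumes l: "l \<in> L" and l': "l' \<in> L" and r: "r \<in> flipped l' - flipped l"
  shows "B l l' = c"
proof -
  have "r \<in> {0..<n} - L" "B l' r = 1 - c" "l \<noteq> l'" using r unfolding flipped_def by auto
  moreover have "B l r = c" using B_cross_entry[OF l] r \<open>r \<in> {0..<n} - L\<close> by blast
  ultimately have "B l' l = 1 - c"
    using source_pair_entry[OF c_ne_half L_less[OF l'] L_less[OF l], of r]
      A_cross_entry[OF l] A_cross_entry[OF l'] l l' by auto
  then show ?thesis
    using gen_tournament_converse[OF tournament_B L_less[OF l] L_less[OF l'] \<open>l \<noteq> l'\<close>] by simp
qed

lemma B_entry_flipped_unflipped:
  assumes l: "l \<in> L" and r: "r \<in> flipped l" and r': "r' \<in> {0..<n} - L - flipped l"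
  shows "B r r' = c"
proof -
  have "r \<in> {0..<n} - L" "B l r = 1 - c" "r \<noteq> r'" using r r' unfolding flipped_def by auto
  then show ?thesis
    using target_pair_entry[OF c_ne_half L_less[OF l], of r r'] B_cross_entry[OF l, of r']
      A_cross_entry[OF l] l r' by auto
qed

lemma flipped_chain:
  assumes "l \<in> L" "l' \<in> L"
  shows "flipped l \<subseteq> flipped l' \<or> flipped l' \<subseteq> flipped l"
proof (rule ccontr)
  assume incomparable: "\<not> ?thesis"
  then have "B l l' = c" "B l' l = c"
    using B_entry_if_flipped_diff assms by blast+
  moreover have "l \<noteq> l'" using incomparable by auto
  ultimately show False
    using gen_tournament_converse[OF tournament_B L_less[OF assms(1)] L_less[OF assms(2)]] c_ne_half
    by simp
qed

lemma uniform_cut_flipped_union: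
  assumes u: "u \<in> L" and S: "S \<subseteq> L"
    and below: "\<And>l. l \<in> S \<Longrightarrow> flipped l \<subseteq> flipped u"
    and above: "\<And>l. l \<in> L - S \<Longrightarrow> flipped u \<subseteq> flipped l"
    and gap: "\<And>l l'. l \<in> S \<Longrightarrow> l' \<in> L - S \<Longrightarrow> \<not> flipped l' \<subseteq> flipped l"
  shows "uniform_cut n B c (S \<union> flipped u)"
  unfolding uniform_cut_def
proof (intro conjI ballI)
  show "S \<union> flipped u \<subseteq> {0..<n}" using S L_subset by (auto simp: flipped_def)
  fix a b assume a: "a \<in> S \<union> flipped u" and b: "b \<in> {0..<n} - (S \<union> flipped u)"
  show "B a b = c"
  proof (cases "a \<in> S"; cases "b \<in> L")
    assume "a \<in> S" "b \<in> L"
    then show ?thesis using gap b S B_entry_if_flipped_diff by blast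
  next
    assume "a \<in> S" "b \<notin> L"
    then show ?thesis using below b S B_cross_entry by blast
  next
    assume "a \<notin> S" "b \<in> L"
    then show ?thesis using above a b B_entry_from_flipped by blast
  next
    assume "a \<notin> S" "b \<notin> L"
    then show ?thesis using a b u B_entry_flipped_unflipped by blast
  qed
qed

lemma separated_in_B:
  assumes u: "u \<in> L" and v: "v \<in> {0..<n} - L"
  shows "separated n B c u v"
proof (cases "v \<in> flipped u")
  case False
  let ?S = "{l \<in> L. flipped l \<subseteq> flipped u}"
  have "uniform_cut n B c (?S \<union> flipped u)"
    by (rule uniform_cut_flipped_union) (use u flipped_chain[OF u] in blast)+
  moreover have "u \<in> ?S \<union> flipped u" "v \<notin> ?S \<union> flipped u" using u v False by auto
  moreover have "u < n" "v < n" using u v L_subset by auto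
  ultimately show ?thesis unfolding separated_def by blast
next
  case True
  let ?S = "{l \<in> L. flipped l \<subset> flipped u}"
  have "uniform_cut n B c (?S \<union> flipped u)"
    by (rule uniform_cut_flipped_union) (use u flipped_chain[OF u] in blast)+
  moreover have "u \<notin> ?S \<union> flipped u" "v \<in> ?S \<union> flipped u"
    using u True unfolding flipped_def by auto
  moreover have "u < n" "v < n" using u v L_subset by auto
  ultimately show ?thesis unfolding separated_def by blast
qed

end

context same_small_minors
begin

lemma separated_transfer:
  assumes "separated n A c u v"
  shows "separated n B c u v"
proof -
  obtain L where L: "uniform_cut n A c L" "u \<in> L \<longleftrightarrow> v \<notin> L" and uv: "u < n" "v < n"
    using assms unfolding separated_def by blast
  show ?thesis
  proof (cases "c = 1/2")
    case True
    then show ?thesis using uniform_cut_half L uv unfolding separated_def by blast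
  next
    case False
    interpret cut_transfer n A B c L by unfold_locales (use L False in auto)
    show ?thesis
    proof (cases "u \<in> L")
      case True
      then show ?thesis using separated_in_B L(2) uv by simp
    next
      case False
      then have "separated n B c v u" using separated_in_B L(2) uv by simp
      then show ?thesis using separated_commute by blast
    qed
  qed
qed

lemma separated_iff: "separated n A c u v \<longleftrightarrow> separated n B c u v"
  using separated_transfer same_small_minors.separated_transfer[OF swap] by blast

lemma common_clan_if_unseparated:
  assumes L: "uniform_cut n A c L" "L \<noteq> {}" "L \<noteq> {0..<n}"
    and uv: "u < n" "v < n" "u \<noteq> v" "\<not> separated n A c u v"
  shows "\<exists>X. is_clan n A X \<and> is_clan n B X \<and> \<not> trivial_clan n X"
proof -
  define P where "P = {w. w < n \<and> \<not> separated n A c u w}"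
  have "P = {w. w < n \<and> \<not> separated n B c u w}"
    unfolding P_def using separated_iff by simp
  then have "is_clan n A P" "is_clan n B P"
    using unseparated_class_is_clan tournament_A tournament_B unfolding P_def by metis+
  moreover obtain w where "w < n" "w \<notin> P"
    using exists_separated[OF L uv(1)] unfolding P_def by blast
  moreover have "u \<in> P" "v \<in> P" "P \<subseteq> {0..<n}"
    using uv unfolding P_def separated_def by auto
  ultimately show ?thesis using not_trivial_clan uv(3) by blast
qed

lemma common_clan_if_all_separated_half:
  assumes n: "n \<ge> 3" and all: "\<And>u v. u < n \<Longrightarrow> v < n \<Longrightarrow> u \<noteq> v \<Longrightarrow> separated n A (1/2) u v"
  shows "\<exists>X. is_clan n A X \<and> is_clan n B X \<and> \<not> trivial_clan n X"
proof -
  have half: "A u v = 1/2" "B u v = 1/2" if "u < n" "v < n" "u \<noteq> v" for u v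
    using separated_entry[OF all[OF that] tournament_A]
      separated_entry[OF separated_transfer[OF all[OF that]] tournament_B] by auto
  have "{0, 1} \<subseteq> {0..<n}" using n by auto
  then have "is_clan n A {0, 1}" "is_clan n B {0, 1}"
    using is_clan_if_off_diagonal_constant[of n _ "1/2"] half by blast+
  moreover have "\<not> trivial_clan n {0, 1}"
    by (rule not_trivial_clan[of _ _ 0 1 2]) (use n in auto)
  ultimately show ?thesis by blast
qed

end

theorem proposition5p8:
  fixes n :: nat and A B :: "nat \<Rightarrow> nat \<Rightarrow> real"
  assumes "n \<ge> 3"
    and "gen_tournament n A" and "gen_tournament n B"
    and "\<And>I. I \<subseteq> {0..<n} \<Longrightarrow> card I \<le> 4 \<Longrightarrow> principal_minor A I = principal_minor B I"
    and "separable n A"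
    and "\<not> (\<exists>\<alpha>>1/2. alpha_linear n \<alpha> A \<and> alpha_linear n \<alpha> B)"
  shows "\<exists>X. is_clan n A X \<and> is_clan n B X \<and> \<not> trivial_clan n X"
proof -
  interpret same_small_minors n A B using assms(2-4) by unfold_locales auto
  obtain c L where c: "c \<ge> 1/2" and L: "uniform_cut n A c L" "L \<noteq> {}" "L \<noteq> {0..<n}"
    using separable_uniform_cut[OF assms(5,2)] by blast
  consider (unseparated) u v where "u < n" "v < n" "u \<noteq> v" "\<not> separated n A c u v"
    | (all_separated) "\<And>u v. u < n \<Longrightarrow> v < n \<Longrightarrow> u \<noteq> v \<Longrightarrow> separated n A c u v"
    by blast
  then show ?thesis
  proof cases
    case unseparated
    then show ?thesis using common_clan_if_unseparated[OF L] by blast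
  next
    case all_separated
    show ?thesis
    proof (cases "c = 1/2")
      case True
      then show ?thesis using common_clan_if_all_separated_half[OF assms(1)] all_separated by blast
    next
      case False
      then have "alpha_linear n c A" "alpha_linear n c B"
        using c all_separated separated_transfer alpha_linear_if_all_separated
          tournament_A tournament_B by auto
      then show ?thesis using assms(6) c False by auto
    qed
  qed
qed

end
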